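(* For each $n\ge1$, $h\in\mathcal H_n$ and $\psi\in C^\alpha_{\mathrm{loc}}(\widehat\Delta)$ we have $(\xi\psi_n)\circ h\in C^\alpha_{\mathrm{loc}}(\Delta)$. More precisely, there exists $C>0$ such that $\|(\xi\psi_n)\circ h\|_\alpha\le C\|\psi\|_\alpha$ for all $\psi\in C^\alpha_{\mathrm{loc}}(\widehat\Delta)$, $h\in\mathcal H_n$ and $n\ge1$.
   Context: $\Delta=[0,1]$, $\alpha\in(0,1]$, $\mathcal P$ countable Lebesgue-mod-0 partition into open intervals, $F:\Delta\to\Delta$ full-branch, $C^{1+\alpha}$ on each element, with inverse branches $\mathcal H,\mathcal H_n$ of $F,F^n$ satisfying $|h'|_\infty\le C_0\rho^n$ ($h\in\mathcal H_n$) and $|\log|h'||_\alpha\le C_0$ ($h\in\mathcal H$), $\rho\in(0,1)$. $\xi$ is the ($\alpha$-Hölder) density of the absolutely continuous $F$-invariant probability $\mu_F$ with respect to Lebesgue. $\Omega\subset\mathbb R^N$ compact Riemannian manifold, $\widehat\Delta=\Delta\times\Omega$ with distance $|x_1-x_2|+|y_1-y_2|$, $\widehat F(x,y)=(F(x),G(x,y))$ with $G$ of class $C^{1+\alpha}$ and $|\widehat F^n(x,y_1)-\widehat F^n(x,y_2)|\le C_0\gamma^n|y_1-y_2|$ ($\gamma\in(0,1)$); write $\widehat F^n(x,y)=(F^n x,G_n(x,y))$. Fix $0\in\Omega$ and set $\psi_n(x)=\psi(\widehat F^n(x,0))$. $C^\alpha_{\mathrm{loc}}(\widehat\Delta)$: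 bounded $\psi$ with $\|\psi\|_\alpha=|\psi|_\infty+\sup_{h\in\mathcal H}\sup\frac{|\psi(hx_1,y_1)-\psi(hx_2,y_2)|}{|x_1-x_2|^\alpha+|y_1-y_2|}<\infty$. $C^\alpha_{\mathrm{loc}}(\Delta)$: bounded $\phi$ with $\|\phi\|_\alpha=|\phi|_\infty+\sup_{h\in\mathcal H}\sup_{x\ne y}|\phi(hx)-\phi(hy)|/|x-y|^\alpha<\infty$. *)

theory Defs
  imports "HOL-Probability.Probability"
begin

definition inv_branches :: "(real \<Rightarrow> real) \<Rightarrow> real set set \<Rightarrow> (real \<Rightarrow> real) set" where
  "inv_branches F P = {h. \<exists>a\<in>P. (\<forall>x\<in>{0<..<1}. h x \<in> a \<and> F (h x) = x) \<and> h ` {0<..<1} = a}"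

primrec inv_branches_n :: "(real \<Rightarrow> real) \<Rightarrow> real set set \<Rightarrow> nat \<Rightarrow> (real \<Rightarrow> real) set" where
  "inv_branches_n F P 0 = {id}"
| "inv_branches_n F P (Suc n) = {h \<circ> g | h g. h \<in> inv_branches F P \<and> g \<in> inv_branches_n F P n}"

definition Fhat :: "(real \<Rightarrow> real) \<Rightarrow> (real \<times> 'b \<Rightarrow> 'b) \<Rightarrow> real \<times> 'b \<Rightarrow> real \<times> 'b" where
  "Fhat F G = (\<lambda>p. (F (fst p), G p))"

definition dhat :: "real \<times> 'b::real_normed_vector \<Rightarrow> real \<times> 'b \<Rightarrow> real" where
  "dhat p q = \<bar>fst p - fst q\<bar> + norm (snd p - snd q)"

definition psi_n :: "(real \<Rightarrow> real) \<Rightarrow> (real \<times> 'b \<Rightarrow> 'b) \<Rightarrow> 'b \<Rightarrow> (real \<times> 'b \<Rightarrow> real) \<Rightarrow> nat \<Rightarrow> real \<Rightarrow> real" where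
  "psi_n F G y0 \<psi> n x = \<psi> ((Fhat F G ^^ n) (x, y0))"

definition hat_sup_set :: "'b set \<Rightarrow> (real \<times> 'b \<Rightarrow> real) \<Rightarrow> real set" where
  "hat_sup_set \<Omega> \<psi> = {\<bar>\<psi> p\<bar> | p. p \<in> {0<..<1} \<times> \<Omega>}"

definition hat_holder_set :: "real \<Rightarrow> (real \<Rightarrow> real) \<Rightarrow> real set set \<Rightarrow> 'b::real_normed_vector set
    \<Rightarrow> (real \<times> 'b \<Rightarrow> real) \<Rightarrow> real set" where
  "hat_holder_set \<alpha> F P \<Omega> \<psi> =
     {\<bar>\<psi> (h x1, y1) - \<psi> (h x2, y2)\<bar> / (\<bar>x1 - x2\<bar> powr \<alpha> + norm (y1 - y2)) | h x1 y1 x2 y2.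
        h \<in> inv_branches F P \<and> x1 \<in> {0<..<1} \<and> x2 \<in> {0<..<1} \<and> y1 \<in> \<Omega> \<and> y2 \<in> \<Omega>
        \<and> (x1, y1) \<noteq> (x2, y2)}"

definition in_Cloc_hat :: "real \<Rightarrow> (real \<Rightarrow> real) \<Rightarrow> real set set \<Rightarrow> 'b::real_normed_vector set
    \<Rightarrow> (real \<times> 'b \<Rightarrow> real) \<Rightarrow> bool" where
  "in_Cloc_hat \<alpha> F P \<Omega> \<psi> \<longleftrightarrow> bdd_above (hat_sup_set \<Omega> \<psi>) \<and> bdd_above (hat_holder_set \<alpha> F P \<Omega> \<psi>)"

definition norm_Cloc_hat :: "real \<Rightarrow> (real \<Rightarrow> real) \<Rightarrow> real set set \<Rightarrow> 'b::real_normed_vector set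
    \<Rightarrow> (real \<times> 'b \<Rightarrow> real) \<Rightarrow> real" where
  "norm_Cloc_hat \<alpha> F P \<Omega> \<psi> = Sup (hat_sup_set \<Omega> \<psi>) + Sup (hat_holder_set \<alpha> F P \<Omega> \<psi>)"

definition sup_set :: "(real \<Rightarrow> real) \<Rightarrow> real set" where
  "sup_set \<phi> = {\<bar>\<phi> x\<bar> | x. x \<in> {0<..<1}}"

definition holder_set :: "real \<Rightarrow> (real \<Rightarrow> real) \<Rightarrow> real set set \<Rightarrow> (real \<Rightarrow> real) \<Rightarrow> real set" where
  "holder_set \<alpha> F P \<phi> =
     {\<bar>\<phi> (h x) - \<phi> (h y)\<bar> / \<bar>x - y\<bar> powr \<alpha> | h x y.
        h \<in> inv_branches F P \<and> x \<in> {0<..<1} \<and> y \<in> {0<..<1} \<and> x \<noteq> y}"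

definition in_Cloc :: "real \<Rightarrow> (real \<Rightarrow> real) \<Rightarrow> real set set \<Rightarrow> (real \<Rightarrow> real) \<Rightarrow> bool" where
  "in_Cloc \<alpha> F P \<phi> \<longleftrightarrow> bdd_above (sup_set \<phi>) \<and> bdd_above (holder_set \<alpha> F P \<phi>)"

definition norm_Cloc :: "real \<Rightarrow> (real \<Rightarrow> real) \<Rightarrow> real set set \<Rightarrow> (real \<Rightarrow> real) \<Rightarrow> real" where
  "norm_Cloc \<alpha> F P \<phi> = Sup (sup_set \<phi>) + Sup (holder_set \<alpha> F P \<phi>)"

end

theory Submission
  imports Defs
begin

text \<open>
  Since F^n o h = id, the point Fhat^n (h x, y0) lies over x, so (\<xi> \<psi>_n) o h is the product of
  \<xi> o h with x \<mapsto> \<psi> (x, Y x) for a fibre coordinate Y. The key point is that Y is Lipschitz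
  uniformly in n and h: moving x by \<delta> moves the k-th base iterate of h x by at most C0 \<delta>
  (that iterate is the image of x under an inverse branch of F^(n-k)), G turns this into a fibre
  discrepancy of at most L C0 \<delta>, and the fibre contraction damps it by C0 \<gamma>^(n-k); the geometric
  series gives the Lipschitz constant C0 L C0 / (1 - \<gamma>). The local Hoelder estimate of the
  product then only uses that \<xi> is bounded and Hoelder and the two parts of the norm of \<psi>.
\<close>

lemma deriv_bound_imp_lipschitz_on:
  fixes f :: "real \<Rightarrow> real"
  assumes "convex S" "0 \<le> c"
    and "\<And>x. x \<in> S \<Longrightarrow> f differentiable (at x)" "\<And>x. x \<in> S \<Longrightarrow> \<bar>deriv f x\<bar> \<le> c"
  shows "c-lipschitz_on S f"
proof (rule bounded_derivative_imp_lipschitz[where f' = "\<lambda>x s. deriv f x * s"])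
  fix x assume "x \<in> S"
  then have "(f has_field_derivative deriv f x) (at x within S)"
    using assms(3) DERIV_deriv_iff_real_differentiable has_field_derivative_at_within by blast
  then show "(f has_derivative (\<lambda>s. deriv f x * s)) (at x within S)"
    by (simp add: has_field_derivative_def)
  show "onorm (\<lambda>s. deriv f x * s) \<le> c"
    using \<open>x \<in> S\<close> assms(4) by (intro onorm_le) (simp add: abs_mult mult_right_mono)
qed (use assms in auto)

lemma inv_branches_image_subset:
  assumes "\<Union>P \<subseteq> {0<..<1}" "g \<in> inv_branches F P"
  shows "g ` {0<..<1} \<subseteq> {0<..<1}"
  using assms unfolding inv_branches_def by blast

lemma inv_branches_n_image_subset:
  assumes "\<Union>P \<subseteq> {0<..<1}" "h \<in> inv_branches_n F P n"
  shows "h ` {0<..<1} \<subseteq> {0<..<1}"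
  using assms(2)
proof (induction n arbitrary: h)
  case (Suc n)
  then obtain g t where "h = g \<circ> t" "g \<in> inv_branches F P" "t \<in> inv_branches_n F P n" by auto
  with Suc.IH inv_branches_image_subset[OF assms(1)] show ?case by (fastforce simp: image_subset_iff)
qed simp

lemma inv_branches_n_one [simp]: "inv_branches_n F P 1 = inv_branches F P"
  by auto

lemma inv_branches_n_lipschitz_on:
  assumes "\<forall>n\<ge>1. \<forall>h\<in>inv_branches_n F P n. \<forall>x\<in>{0<..<1}.
             h differentiable (at x) \<and> \<bar>deriv h x\<bar> \<le> C0 * \<rho> ^ n"
    and "0 \<le> C0" "0 \<le> \<rho>" "\<rho> \<le> 1" "1 \<le> n" "h \<in> inv_branches_n F P n"
  shows "C0-lipschitz_on {0<..<1} h"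
proof -
  have "\<forall>x\<in>{0<..<1}. h differentiable (at x) \<and> \<bar>deriv h x\<bar> \<le> C0 * \<rho> ^ n"
    using assms(1,5,6) by blast
  then have "(C0 * \<rho> ^ n)-lipschitz_on {0<..<1} h"
    using assms(2,3) by (intro deriv_bound_imp_lipschitz_on) auto
  moreover have "C0 * \<rho> ^ n \<le> C0" using assms(2-4) by (simp add: power_le_one mult_left_le)
  ultimately show ?thesis by (rule lipschitz_on_le)
qed

lemma funpow_inv_branches_n:
  assumes "\<Union>P \<subseteq> {0<..<1}" "h \<in> inv_branches_n F P n" "k \<le> n"
  shows "\<exists>t\<in>inv_branches_n F P (n - k). \<forall>z\<in>{0<..<1}. (F ^^ k) (h z) = t z"
  using assms(2,3)
proof (induction n arbitrary: h k)
  case (Suc n)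
  note IH = Suc.IH and k_le = Suc.prems(2)
  obtain g t where h: "h = g \<circ> t" "g \<in> inv_branches F P" "t \<in> inv_branches_n F P n"
    using Suc.prems(1) by auto
  show ?case
  proof (cases k)
    case (Suc k')
    with k_le IH[OF h(3)] obtain s where s: "s \<in> inv_branches_n F P (n - k')"
      "\<forall>z\<in>{0<..<1}. (F ^^ k') (t z) = s z" by auto
    have "F (g (t z)) = t z" if "z \<in> {0<..<1}" for z
      using h(2) inv_branches_n_image_subset[OF assms(1) h(3)] that unfolding inv_branches_def by blast
    then have "(F ^^ k) (h z) = s z" if "z \<in> {0<..<1}" for z
      using s(2) that by (simp only: Suc h(1) funpow_Suc_right comp_def)
    with s Suc show ?thesis by auto
  qed (use Suc.prems(1) in auto)
qed simp

corollary funpow_inv_branches_n_cancel: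
  assumes "\<Union>P \<subseteq> {0<..<1}" "h \<in> inv_branches_n F P n" "z \<in> {0<..<1}"
  shows "(F ^^ n) (h z) = z"
  using funpow_inv_branches_n[OF assms(1,2) order_refl] assms(3) by auto

lemma fst_funpow_Fhat: "fst ((Fhat F G ^^ k) p) = (F ^^ k) (fst p)"
  by (induction k) (auto simp: Fhat_def)

lemma funpow_Fhat_Suc: "(Fhat F G ^^ Suc n) (x, y) = (Fhat F G ^^ n) (F x, G (x, y))"
  by (simp only: funpow_Suc_right comp_def) (simp add: Fhat_def)

lemma funpow_Fhat_in:
  assumes "\<forall>x\<in>{0..1}. F x \<in> {0..1}" "\<forall>p\<in>{0..1} \<times> \<Omega>. G p \<in> \<Omega>" "p \<in> {0..1} \<times> \<Omega>"
  shows "(Fhat F G ^^ k) p \<in> {0..1} \<times> \<Omega>"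
proof (induction k)
  case (Suc k)
  then show ?case using assms(1,2) by (cases "(Fhat F G ^^ k) p") (auto simp: Fhat_def)
qed (use assms(3) in simp)

lemma funpow_Fhat_inv_branch:
  assumes "\<Union>P \<subseteq> {0<..<1}" "\<forall>x\<in>{0..1}. F x \<in> {0..1}" "\<forall>p\<in>{0..1} \<times> \<Omega>. G p \<in> \<Omega>"
    and "h \<in> inv_branches_n F P n" "w \<in> \<Omega>" "x \<in> {0<..<1}"
  shows "(Fhat F G ^^ n) (h x, w) \<in> {x} \<times> \<Omega>"
proof -
  have "(h x, w) \<in> {0..1} \<times> \<Omega>" using inv_branches_n_image_subset[OF assms(1,4)] assms(5,6) by fastforce
  then have "(Fhat F G ^^ n) (h x, w) \<in> {0..1} \<times> \<Omega>" by (rule funpow_Fhat_in[OF assms(2,3)])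
  moreover have "fst ((Fhat F G ^^ n) (h x, w)) = x"
    using funpow_inv_branches_n_cancel[OF assms(1,4,6)] by (simp add: fst_funpow_Fhat)
  ultimately show ?thesis by (auto simp: mem_Times_iff)
qed

lemma snd_funpow_Fhat_dist_le:
  fixes G :: "real \<times> 'b::real_normed_vector \<Rightarrow> 'b"
  assumes F_maps: "\<forall>x\<in>{0..1}. F x \<in> {0..1}" and G_maps: "\<forall>p\<in>{0..1} \<times> \<Omega>. G p \<in> \<Omega>"
    and G_lip: "\<And>w. w \<in> \<Omega> \<Longrightarrow> L-lipschitz_on {0..1} (\<lambda>x. G (x, w))"
    and G_contr: "\<forall>n x y1 y2. x \<in> {0..1} \<and> y1 \<in> \<Omega> \<and> y2 \<in> \<Omega> \<longrightarrow>
                    dhat ((Fhat F G ^^ n) (x, y1)) ((Fhat F G ^^ n) (x, y2)) \<le> C0 * \<gamma> ^ n * norm (y1 - y2)"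
    and "u \<in> {0..1}" "v \<in> {0..1}" "w \<in> \<Omega>" and C0: "0 \<le> C0" and \<gamma>: "0 \<le> \<gamma>"
  shows "dist (snd ((Fhat F G ^^ n) (u, w))) (snd ((Fhat F G ^^ n) (v, w)))
           \<le> (\<Sum>k<n. C0 * \<gamma> ^ (n - Suc k) * L * dist ((F ^^ k) u) ((F ^^ k) v))"
  using assms(5-7)
proof (induction n arbitrary: u v w)
  case (Suc n)
  let ?snd = "\<lambda>p. snd ((Fhat F G ^^ n) p)"
  have Fu: "F u \<in> {0..1}" and Fv: "F v \<in> {0..1}" using F_maps Suc.prems by auto
  have Gw: "G (u, w) \<in> \<Omega>" "G (v, w) \<in> \<Omega>" using G_maps Suc.prems by auto
  have "dist (?snd (F u, G (u, w))) (?snd (F u, G (v, w)))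
          \<le> dhat ((Fhat F G ^^ n) (F u, G (u, w))) ((Fhat F G ^^ n) (F u, G (v, w)))"
    by (simp add: dhat_def dist_norm)
  also have "\<dots> \<le> C0 * \<gamma> ^ n * dist (G (u, w)) (G (v, w))"
    using G_contr Fu Gw by (simp add: dist_norm)
  also have "\<dots> \<le> C0 * \<gamma> ^ n * (L * dist u v)"
    using lipschitz_onD[OF G_lip[OF Suc.prems(3)] Suc.prems(1,2)] C0 \<gamma>
    by (intro mult_left_mono) auto
  finally have first: "dist (?snd (F u, G (u, w))) (?snd (F u, G (v, w))) \<le> C0 * \<gamma> ^ n * L * dist u v"
    by (simp add: mult_ac)
  have "dist (?snd (F u, G (u, w))) (?snd (F v, G (v, w)))
          \<le> dist (?snd (F u, G (u, w))) (?snd (F u, G (v, w))) + dist (?snd (F u, G (v, w))) (?snd (F v, G (v, w)))"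
    by (rule dist_triangle)
  also have "\<dots> \<le> C0 * \<gamma> ^ n * L * dist u v
                  + (\<Sum>k<n. C0 * \<gamma> ^ (n - Suc k) * L * dist ((F ^^ k) (F u)) ((F ^^ k) (F v)))"
    using first Suc.IH[OF Fu Fv Gw(2)] by (rule add_mono)
  also have "\<dots> = (\<Sum>k<Suc n. C0 * \<gamma> ^ (Suc n - Suc k) * L * dist ((F ^^ k) u) ((F ^^ k) v))"
    by (simp only: sum.lessThan_Suc_shift funpow_Suc_right comp_def) simp
  finally show ?case by (simp only: funpow_Fhat_Suc)
qed simp

lemma geometric_sum_le:
  fixes \<gamma> :: real
  assumes "0 \<le> \<gamma>" "\<gamma> < 1"
  shows "(\<Sum>k<n. \<gamma> ^ k) \<le> 1 / (1 - \<gamma>)"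
proof -
  have "(\<Sum>k<n. \<gamma> ^ k) \<le> (\<Sum>k. \<gamma> ^ k)"
    using assms by (intro sum_le_suminf summable_geometric) auto
  then show ?thesis using assms by (simp add: suminf_geometric)
qed

lemma snd_funpow_Fhat_branch_lipschitz_on:
  fixes G :: "real \<times> 'b::real_normed_vector \<Rightarrow> 'b"
  assumes P_sub: "\<Union>P \<subseteq> {0<..<1}"
    and F_maps: "\<forall>x\<in>{0..1}. F x \<in> {0..1}" and G_maps: "\<forall>p\<in>{0..1} \<times> \<Omega>. G p \<in> \<Omega>"
    and G_lip: "\<And>w. w \<in> \<Omega> \<Longrightarrow> L-lipschitz_on {0..1} (\<lambda>x. G (x, w))"
    and G_contr: "\<forall>n x y1 y2. x \<in> {0..1} \<and> y1 \<in> \<Omega> \<and> y2 \<in> \<Omega> \<longrightarrow>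
                    dhat ((Fhat F G ^^ n) (x, y1)) ((Fhat F G ^^ n) (x, y2)) \<le> C0 * \<gamma> ^ n * norm (y1 - y2)"
    and branches_lip: "\<And>m t. 1 \<le> m \<Longrightarrow> t \<in> inv_branches_n F P m \<Longrightarrow> C0-lipschitz_on {0<..<1} t"
    and C0: "0 \<le> C0" and \<gamma>: "0 \<le> \<gamma>" "\<gamma> < 1"
    and h: "h \<in> inv_branches_n F P n" and "w \<in> \<Omega>"
  shows "(C0 * L * C0 / (1 - \<gamma>))-lipschitz_on {0<..<1} (\<lambda>z. snd ((Fhat F G ^^ n) (h z, w)))"
proof (rule lipschitz_onI)
  have L0: "0 \<le> L" using G_lip[OF \<open>w \<in> \<Omega>\<close>] by (rule lipschitz_on_nonneg)
  then show "0 \<le> C0 * L * C0 / (1 - \<gamma>)" using C0 \<gamma> by simp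
  fix z1 z2 :: real assume z: "z1 \<in> {0<..<1}" "z2 \<in> {0<..<1}"
  have tail: "dist ((F ^^ k) (h z1)) ((F ^^ k) (h z2)) \<le> C0 * dist z1 z2" if "k < n" for k
  proof -
    obtain t where t: "t \<in> inv_branches_n F P (n - k)" "\<forall>z\<in>{0<..<1}. (F ^^ k) (h z) = t z"
      using funpow_inv_branches_n[OF P_sub h less_imp_le[OF \<open>k < n\<close>]] by blast
    have "C0-lipschitz_on {0<..<1} t" using branches_lip[OF _ t(1)] \<open>k < n\<close> by simp
    with t(2) z show ?thesis by (simp add: lipschitz_onD)
  qed
  have hz: "h z1 \<in> {0..1}" "h z2 \<in> {0..1}"
    using inv_branches_n_image_subset[OF P_sub h] z by fastforce+
  have "dist (snd ((Fhat F G ^^ n) (h z1, w))) (snd ((Fhat F G ^^ n) (h z2, w)))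
          \<le> (\<Sum>k<n. C0 * \<gamma> ^ (n - Suc k) * L * dist ((F ^^ k) (h z1)) ((F ^^ k) (h z2)))"
    by (rule snd_funpow_Fhat_dist_le[OF F_maps G_maps G_lip G_contr hz \<open>w \<in> \<Omega>\<close> C0 \<gamma>(1)])
  also have "\<dots> \<le> (\<Sum>k<n. C0 * \<gamma> ^ (n - Suc k) * L * (C0 * dist z1 z2))"
    using tail L0 C0 \<gamma> by (intro sum_mono mult_left_mono) auto
  also have "\<dots> = C0 * L * C0 * dist z1 z2 * (\<Sum>k<n. \<gamma> ^ (n - Suc k))"
    by (simp add: sum_distrib_left mult_ac)
  also have "(\<Sum>k<n. \<gamma> ^ (n - Suc k)) = (\<Sum>k<n. \<gamma> ^ k)"
    by (rule sum.nat_diff_reindex)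
  also have "C0 * L * C0 * dist z1 z2 * (\<Sum>k<n. \<gamma> ^ k) \<le> C0 * L * C0 * dist z1 z2 * (1 / (1 - \<gamma>))"
    using geometric_sum_le \<gamma> C0 L0 by (intro mult_left_mono) auto
  finally show "dist (snd ((Fhat F G ^^ n) (h z1, w))) (snd ((Fhat F G ^^ n) (h z2, w)))
                  \<le> C0 * L * C0 / (1 - \<gamma>) * dist z1 z2"
    by simp
qed

lemma holder_bounded_gauge_imp_bounded:
  fixes f :: "'a \<Rightarrow> 'c::real_normed_vector"
  assumes "0 \<le> \<alpha>"
    and "\<And>p q. p \<in> S \<Longrightarrow> q \<in> S \<Longrightarrow> norm (f p - f q) \<le> K * d p q powr \<alpha>"
    and "\<And>p q. p \<in> S \<Longrightarrow> q \<in> S \<Longrightarrow> 0 \<le> d p q \<and> d p q \<le> D"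
  shows "bounded (f ` S)"
proof (cases "S = {}")
  case False
  then obtain q where q: "q \<in> S" by blast
  have "norm (f p) \<le> norm (f q) + \<bar>K\<bar> * D powr \<alpha>" if p: "p \<in> S" for p
  proof -
    have "norm (f p) \<le> norm (f q) + norm (f p - f q)" by (rule norm_triangle_sub)
    also have "norm (f p - f q) \<le> K * d p q powr \<alpha>" using assms(2)[OF p q] .
    also have "\<dots> \<le> \<bar>K\<bar> * d p q powr \<alpha>" by (intro mult_right_mono) auto
    also have "\<dots> \<le> \<bar>K\<bar> * D powr \<alpha>"
      using assms(3)[OF p q] assms(1) by (intro mult_left_mono powr_mono2) auto
    finally show ?thesis by simp
  qed
  then show ?thesis by (auto simp: bounded_iff)
qed simp

lemma dhat_le_norm_diff: "dhat p q \<le> 2 * norm (p - q)"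
proof (cases p, cases q)
  fix a b c d assume "p = (a, b)" "q = (c, d)"
  then show ?thesis
    using norm_fst_le[of "a - c" "b - d"] norm_snd_le[of "b - d" "a - c"] by (simp add: dhat_def)
qed

lemma bounded_derivative_imp_lipschitz_on_base:
  fixes G :: "real \<times> 'b::real_normed_vector \<Rightarrow> 'c::real_normed_vector"
  assumes "convex S" "w \<in> \<Omega>" "0 \<le> L"
    and "\<forall>p\<in>S \<times> \<Omega>. (G has_derivative blinfun_apply (G' p)) (at p within S \<times> \<Omega>)"
    and "\<forall>p\<in>S \<times> \<Omega>. norm (G' p) \<le> L"
  shows "L-lipschitz_on S (\<lambda>x. G (x, w))"
proof (rule bounded_derivative_imp_lipschitz[where f' = "\<lambda>x u. blinfun_apply (G' (x, w)) (u, 0)"])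
  fix x assume x: "x \<in> S"
  have pair: "((\<lambda>x. (x, w)) has_derivative (\<lambda>u. (u, 0))) (at x within S)"
    by (auto intro!: derivative_eq_intros)
  show "((\<lambda>x. G (x, w)) has_derivative (\<lambda>u. blinfun_apply (G' (x, w)) (u, 0))) (at x within S)"
    by (rule has_derivative_in_compose2[where t = "S \<times> \<Omega>" and g' = "\<lambda>p. blinfun_apply (G' p)", OF _ _ x pair])
      (use assms(2,4) in auto)
  show "onorm (\<lambda>u. blinfun_apply (G' (x, w)) (u, 0)) \<le> L"
  proof (rule onorm_le)
    fix u :: real
    have "norm (blinfun_apply (G' (x, w)) (u, 0)) \<le> norm (G' (x, w)) * norm (u, 0::'b)"
      by (rule norm_blinfun)
    also have "\<dots> \<le> L * norm u"
      using assms(2,5) x by (auto intro!: mult_right_mono simp: norm_Pair)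
    finally show "norm (blinfun_apply (G' (x, w)) (u, 0)) \<le> L * norm u" .
  qed
qed (use assms(1,3) in auto)

lemma C1alpha_imp_lipschitz_on_base:
  fixes G :: "real \<times> 'b::real_normed_vector \<Rightarrow> 'b"
  assumes "\<exists>G' K. (\<forall>p\<in>{0..1} \<times> \<Omega>. (G has_derivative blinfun_apply (G' p)) (at p within {0..1} \<times> \<Omega>))
                  \<and> (\<forall>p\<in>{0..1} \<times> \<Omega>. \<forall>q\<in>{0..1} \<times> \<Omega>. norm (G' p - G' q) \<le> K * dhat p q powr \<alpha>)"
    and "bounded \<Omega>" "0 \<le> \<alpha>"
  shows "\<exists>L. \<forall>w\<in>\<Omega>. L-lipschitz_on {0..1} (\<lambda>x. G (x, w))"
proof -
  obtain G' K where G': "\<forall>p\<in>{0..1} \<times> \<Omega>. (G has_derivative blinfun_apply (G' p)) (at p within {0..1} \<times> \<Omega>)"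
    and G'_holder: "\<forall>p\<in>{0..1} \<times> \<Omega>. \<forall>q\<in>{0..1} \<times> \<Omega>. norm (G' p - G' q) \<le> K * dhat p q powr \<alpha>"
    using assms(1) by blast
  have "bounded ({0..1::real} \<times> \<Omega>)" using assms(2) by (simp add: bounded_Times)
  then obtain D where D: "\<forall>p\<in>{0..1::real} \<times> \<Omega>. norm p \<le> D" unfolding bounded_iff by blast
  have "0 \<le> dhat p q \<and> dhat p q \<le> 4 * D" if "p \<in> {0..1} \<times> \<Omega>" "q \<in> {0..1} \<times> \<Omega>" for p q
  proof -
    have "norm p \<le> D" "norm q \<le> D" using D that by auto
    then show ?thesis
      using dhat_le_norm_diff[of p q] norm_triangle_ineq4[of p q] by (simp add: dhat_def)
  qed
  then have "bounded (G' ` ({0..1} \<times> \<Omega>))"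
    using G'_holder assms(3) by (intro holder_bounded_gauge_imp_bounded[where d = dhat and K = K]) auto
  then obtain L where L: "L > 0" "\<forall>p\<in>{0..1} \<times> \<Omega>. norm (G' p) \<le> L" by (auto simp: bounded_pos)
  have "L-lipschitz_on {0..1} (\<lambda>x. G (x, w))" if "w \<in> \<Omega>" for w
    using L(1) by (intro bounded_derivative_imp_lipschitz_on_base[OF _ that _ G' L(2)]) auto
  then show ?thesis by blast
qed

lemma abs_le_Sup_hat_sup_set:
  assumes "in_Cloc_hat \<alpha> F P \<Omega> \<psi>" "p \<in> {0<..<1} \<times> \<Omega>"
  shows "\<bar>\<psi> p\<bar> \<le> Sup (hat_sup_set \<Omega> \<psi>)"
proof (rule cSup_upper)
  show "\<bar>\<psi> p\<bar> \<in> hat_sup_set \<Omega> \<psi>" using assms(2) unfolding hat_sup_set_def by blast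
qed (use assms(1) in \<open>simp add: in_Cloc_hat_def\<close>)

lemma hat_holder_le_Sup_hat_holder_set:
  assumes "in_Cloc_hat \<alpha> F P \<Omega> \<psi>" "g \<in> inv_branches F P"
    and "x1 \<in> {0<..<1}" "x2 \<in> {0<..<1}" "y1 \<in> \<Omega>" "y2 \<in> \<Omega>"
  shows "\<bar>\<psi> (g x1, y1) - \<psi> (g x2, y2)\<bar>
           \<le> Sup (hat_holder_set \<alpha> F P \<Omega> \<psi>) * (\<bar>x1 - x2\<bar> powr \<alpha> + norm (y1 - y2))"
proof (cases "(x1, y1) = (x2, y2)")
  case False
  then have "0 < \<bar>x1 - x2\<bar> powr \<alpha> \<or> 0 < norm (y1 - y2)" by auto
  then have pos: "0 < \<bar>x1 - x2\<bar> powr \<alpha> + norm (y1 - y2)"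
    by (metis add_nonneg_pos add_pos_nonneg norm_ge_zero powr_ge_zero)
  have "\<bar>\<psi> (g x1, y1) - \<psi> (g x2, y2)\<bar> / (\<bar>x1 - x2\<bar> powr \<alpha> + norm (y1 - y2))
          \<le> Sup (hat_holder_set \<alpha> F P \<Omega> \<psi>)"
  proof (rule cSup_upper)
    show "\<bar>\<psi> (g x1, y1) - \<psi> (g x2, y2)\<bar> / (\<bar>x1 - x2\<bar> powr \<alpha> + norm (y1 - y2))
            \<in> hat_holder_set \<alpha> F P \<Omega> \<psi>"
      using assms(2-6) False unfolding hat_holder_set_def by blast
  qed (use assms(1) in \<open>simp add: in_Cloc_hat_def\<close>)
  with pos show ?thesis by (simp add: pos_divide_le_eq mult.commute)
qed simp

lemma Sup_hat_sup_set_nonneg: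
  assumes "in_Cloc_hat \<alpha> F P \<Omega> \<psi>" "\<Omega> \<noteq> {}"
  shows "0 \<le> Sup (hat_sup_set \<Omega> \<psi>)"
proof -
  obtain y where "y \<in> \<Omega>" using assms(2) by blast
  then show ?thesis
    using abs_le_Sup_hat_sup_set[OF assms(1), of "(1/2, y)"] by simp
qed

lemma Sup_hat_holder_set_nonneg:
  assumes "in_Cloc_hat \<alpha> F P \<Omega> \<psi>" "\<Omega> \<noteq> {}" "inv_branches F P \<noteq> {}"
  shows "0 \<le> Sup (hat_holder_set \<alpha> F P \<Omega> \<psi>)"
proof -
  obtain y g where "y \<in> \<Omega>" "g \<in> inv_branches F P" using assms(2,3) by blast
  then have "\<bar>\<psi> (g (1/2), y) - \<psi> (g (1/4), y)\<bar>
               \<le> Sup (hat_holder_set \<alpha> F P \<Omega> \<psi>) * (\<bar>1/2 - 1/4\<bar> powr \<alpha> + norm (y - y))"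
    by (intro hat_holder_le_Sup_hat_holder_set[OF assms(1)]) auto
  then have "0 \<le> Sup (hat_holder_set \<alpha> F P \<Omega> \<psi>) * (\<bar>1/2 - 1/4\<bar> powr \<alpha> + norm (y - y))"
    by (rule order_trans[OF abs_ge_zero])
  then show ?thesis by (simp add: zero_le_mult_iff)
qed

text \<open>The nonemptiness hypothesis is needed because \<open>Sup {}\<close> is unspecified on the reals.\<close>

lemma in_Cloc_norm_Cloc_leI:
  assumes "inv_branches F P \<noteq> {}"
    and sup: "\<And>x. x \<in> {0<..<1} \<Longrightarrow> \<bar>\<phi> x\<bar> \<le> S"
    and holder: "\<And>g x y. g \<in> inv_branches F P \<Longrightarrow> x \<in> {0<..<1} \<Longrightarrow> y \<in> {0<..<1} \<Longrightarrow> x \<noteq> y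
                   \<Longrightarrow> \<bar>\<phi> (g x) - \<phi> (g y)\<bar> \<le> T * \<bar>x - y\<bar> powr \<alpha>"
  shows "in_Cloc \<alpha> F P \<phi> \<and> norm_Cloc \<alpha> F P \<phi> \<le> S + T"
proof -
  have sup_le: "r \<le> S" if "r \<in> sup_set \<phi>" for r
    using that sup unfolding sup_set_def by auto
  have holder_le: "r \<le> T" if r: "r \<in> holder_set \<alpha> F P \<phi>" for r
  proof -
    obtain g x y where r: "r = \<bar>\<phi> (g x) - \<phi> (g y)\<bar> / \<bar>x - y\<bar> powr \<alpha>"
      and g: "g \<in> inv_branches F P" and xy: "x \<in> {0<..<1}" "y \<in> {0<..<1}" "x \<noteq> y"
      using r unfolding holder_set_def by blast
    then show ?thesis using holder[OF g xy] by (simp add: pos_divide_le_eq)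
  qed
  obtain g where g: "g \<in> inv_branches F P" using assms(1) by blast
  have "sup_set \<phi> \<noteq> {}" unfolding sup_set_def by (auto intro!: exI[of _ "1/2"])
  moreover have "\<bar>\<phi> (g (1/2)) - \<phi> (g (1/4))\<bar> / \<bar>1/2 - 1/4\<bar> powr \<alpha> \<in> holder_set \<alpha> F P \<phi>"
    unfolding holder_set_def using g by (intro CollectI exI[of _ g] exI[of _ "1/2"] exI[of _ "1/4"]) simp
  then have "holder_set \<alpha> F P \<phi> \<noteq> {}" by blast
  ultimately have "Sup (sup_set \<phi>) \<le> S" "Sup (holder_set \<alpha> F P \<phi>) \<le> T"
    using sup_le holder_le by (auto intro!: cSup_least)
  moreover have "bdd_above (sup_set \<phi>)" using sup_le by (rule bdd_aboveI)
  moreover have "bdd_above (holder_set \<alpha> F P \<phi>)" using holder_le by (rule bdd_aboveI)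
  ultimately show ?thesis by (simp add: in_Cloc_def norm_Cloc_def)
qed

context
  fixes \<alpha> c c' K M Xi :: real and F :: "real \<Rightarrow> real" and P :: "real set set"
    and \<Omega> :: "'b::real_normed_vector set" and \<psi> :: "real \<times> 'b \<Rightarrow> real"
    and \<xi> h :: "real \<Rightarrow> real" and \<Phi> :: "real \<Rightarrow> real \<times> 'b"
  assumes \<psi>: "in_Cloc_hat \<alpha> F P \<Omega> \<psi>" and \<alpha>: "0 < \<alpha>" "\<alpha> \<le> 1"
    and branches: "inv_branches F P \<noteq> {}"
      "\<And>g. g \<in> inv_branches F P \<Longrightarrow> g ` {0<..<1} \<subseteq> {0<..<1}"
      "\<And>g. g \<in> inv_branches F P \<Longrightarrow> c-lipschitz_on {0<..<1} g"
    and h: "h ` {0<..<1} \<subseteq> {0..1}" "c'-lipschitz_on {0<..<1} h"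
    and \<xi>: "\<And>x. x \<in> {0..1} \<Longrightarrow> \<bar>\<xi> x\<bar> \<le> Xi" "0 \<le> K"
      "\<And>x y. x \<in> {0..1} \<Longrightarrow> y \<in> {0..1} \<Longrightarrow> \<bar>\<xi> x - \<xi> y\<bar> \<le> K * \<bar>x - y\<bar> powr \<alpha>"
    and \<Phi>: "\<And>x. x \<in> {0<..<1} \<Longrightarrow> \<Phi> x \<in> {x} \<times> \<Omega>"
      "M-lipschitz_on {0<..<1} (\<lambda>x. snd (\<Phi> x))"
begin

private lemma \<Phi>_eq: "x \<in> {0<..<1} \<Longrightarrow> \<Phi> x = (x, snd (\<Phi> x))"
  using \<Phi>(1) by (auto simp: mem_Times_iff prod_eq_iff)

private lemma \<xi>_branch_diff:
  assumes "g \<in> inv_branches F P" "x \<in> {0<..<1}" "y \<in> {0<..<1}"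
  shows "\<bar>\<xi> (h (g x)) - \<xi> (h (g y))\<bar> \<le> K * (c' * c) powr \<alpha> * \<bar>x - y\<bar> powr \<alpha>"
proof -
  have hg_lip: "(c' * c)-lipschitz_on {0<..<1} (\<lambda>x. h (g x))"
    using branches(2,3)[OF assms(1)] h(2) by (intro lipschitz_on_compose2) (auto intro: lipschitz_on_subset)
  have "h (g x) \<in> {0..1}" "h (g y) \<in> {0..1}" using branches(2)[OF assms(1)] h(1) assms(2,3) by blast+
  then have "\<bar>\<xi> (h (g x)) - \<xi> (h (g y))\<bar> \<le> K * \<bar>h (g x) - h (g y)\<bar> powr \<alpha>" by (rule \<xi>(3))
  also have "\<dots> \<le> K * (c' * c * \<bar>x - y\<bar>) powr \<alpha>"
    using lipschitz_onD[OF hg_lip assms(2,3)] \<xi>(2) \<alpha>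
    by (intro mult_left_mono powr_mono2) (auto simp: dist_real_def)
  also have "\<dots> = K * (c' * c) powr \<alpha> * \<bar>x - y\<bar> powr \<alpha>"
    using lipschitz_on_nonneg[OF hg_lip] by (simp add: powr_mult)
  finally show ?thesis .
qed

private lemma \<psi>_branch_diff:
  assumes "g \<in> inv_branches F P" "x \<in> {0<..<1}" "y \<in> {0<..<1}"
  shows "\<bar>\<psi> (\<Phi> (g x)) - \<psi> (\<Phi> (g y))\<bar>
           \<le> Sup (hat_holder_set \<alpha> F P \<Omega> \<psi>) * (1 + M * c) * \<bar>x - y\<bar> powr \<alpha>"
proof -
  let ?B = "Sup (hat_holder_set \<alpha> F P \<Omega> \<psi>)" and ?e = "\<bar>x - y\<bar> powr \<alpha>"
  have gxy: "g x \<in> {0<..<1}" "g y \<in> {0<..<1}" using branches(2)[OF assms(1)] assms(2,3) by blast+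
  have "\<Omega> \<noteq> {}" using \<Phi>(1)[OF assms(2)] by auto
  then have B0: "0 \<le> ?B" using Sup_hat_holder_set_nonneg[OF \<psi> _ branches(1)] by blast
  have "\<bar>x - y\<bar> powr 1 \<le> ?e" using assms(2,3) \<alpha> by (intro powr_mono') auto
  then have diff_le: "\<bar>x - y\<bar> \<le> ?e" by simp
  have M0: "0 \<le> M" and c0: "0 \<le> c"
    using lipschitz_on_nonneg \<Phi>(2) branches(3)[OF assms(1)] by blast+
  have "norm (snd (\<Phi> (g x)) - snd (\<Phi> (g y))) \<le> M * \<bar>g x - g y\<bar>"
    using lipschitz_onD[OF \<Phi>(2) gxy] by (simp add: dist_norm dist_real_def)
  also have "\<dots> \<le> M * (c * \<bar>x - y\<bar>)"
    using lipschitz_onD[OF branches(3)[OF assms(1)] assms(2,3)] M0 by (intro mult_left_mono) (auto simp: dist_real_def)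
  also have "\<dots> \<le> M * (c * ?e)" using diff_le M0 c0 by (intro mult_left_mono) auto
  finally have Y_diff: "norm (snd (\<Phi> (g x)) - snd (\<Phi> (g y))) \<le> M * (c * ?e)" .
  have Y_in: "snd (\<Phi> (g x)) \<in> \<Omega>" "snd (\<Phi> (g y)) \<in> \<Omega>"
    using \<Phi>(1)[OF gxy(1)] \<Phi>(1)[OF gxy(2)] by (auto simp: mem_Times_iff)
  have "\<bar>\<psi> (g x, snd (\<Phi> (g x))) - \<psi> (g y, snd (\<Phi> (g y)))\<bar>
          \<le> ?B * (?e + norm (snd (\<Phi> (g x)) - snd (\<Phi> (g y))))"
    by (rule hat_holder_le_Sup_hat_holder_set[OF \<psi> assms Y_in])
  then have "\<bar>\<psi> (\<Phi> (g x)) - \<psi> (\<Phi> (g y))\<bar> \<le> ?B * (?e + norm (snd (\<Phi> (g x)) - snd (\<Phi> (g y))))"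
    by (simp flip: \<Phi>_eq[OF gxy(1)] \<Phi>_eq[OF gxy(2)])
  also have "\<dots> \<le> ?B * (?e + M * (c * ?e))" using Y_diff B0 by (intro mult_left_mono) auto
  finally show ?thesis by (simp add: algebra_simps)
qed

lemma in_Cloc_branch_product:
  "in_Cloc \<alpha> F P (\<lambda>x. \<xi> (h x) * \<psi> (\<Phi> x)) \<and>
   norm_Cloc \<alpha> F P (\<lambda>x. \<xi> (h x) * \<psi> (\<Phi> x))
     \<le> (Xi + K * (c' * c) powr \<alpha> + Xi * (1 + M * c)) * norm_Cloc_hat \<alpha> F P \<Omega> \<psi>"
proof -
  define A B where "A = Sup (hat_sup_set \<Omega> \<psi>)" and "B = Sup (hat_holder_set \<alpha> F P \<Omega> \<psi>)"
  have "\<Omega> \<noteq> {}" using \<Phi>(1)[of "1/2"] by auto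
  then have A0: "0 \<le> A" and B0: "0 \<le> B"
    unfolding A_def B_def using Sup_hat_sup_set_nonneg[OF \<psi>] Sup_hat_holder_set_nonneg[OF \<psi> _ branches(1)] by auto
  have Xi0: "0 \<le> Xi" using \<xi>(1)[of 0] by simp
  have M0: "0 \<le> M" and c0: "0 \<le> c"
    using lipschitz_on_nonneg \<Phi>(2) branches(1,3) by blast+
  have \<psi>_le: "\<bar>\<psi> (\<Phi> x)\<bar> \<le> A" if "x \<in> {0<..<1}" for x
    unfolding A_def using \<Phi>(1)[OF that] that by (intro abs_le_Sup_hat_sup_set[OF \<psi>]) (auto simp: mem_Times_iff)
  have \<xi>h_le: "\<bar>\<xi> (h x)\<bar> \<le> Xi" if "x \<in> {0<..<1}" for x
    using \<xi>(1) h(1) that by blast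
  let ?\<phi> = "\<lambda>x. \<xi> (h x) * \<psi> (\<Phi> x)"
  have sup: "\<bar>?\<phi> x\<bar> \<le> Xi * A" if "x \<in> {0<..<1}" for x
    unfolding abs_mult using \<xi>h_le[OF that] \<psi>_le[OF that] Xi0 by (intro mult_mono) auto
  have holder: "\<bar>?\<phi> (g x) - ?\<phi> (g y)\<bar> \<le> (K * (c' * c) powr \<alpha> * A + Xi * (1 + M * c) * B) * \<bar>x - y\<bar> powr \<alpha>"
    if g: "g \<in> inv_branches F P" and x: "x \<in> {0<..<1}" and y: "y \<in> {0<..<1}" for g x y
  proof -
    have gxy: "g x \<in> {0<..<1}" "g y \<in> {0<..<1}" using branches(2)[OF g] x y by blast+
    have "?\<phi> (g x) - ?\<phi> (g y) = (\<xi> (h (g x)) - \<xi> (h (g y))) * \<psi> (\<Phi> (g x))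
                                  + \<xi> (h (g y)) * (\<psi> (\<Phi> (g x)) - \<psi> (\<Phi> (g y)))"
      by (simp add: algebra_simps)
    then have "\<bar>?\<phi> (g x) - ?\<phi> (g y)\<bar> \<le> \<bar>\<xi> (h (g x)) - \<xi> (h (g y))\<bar> * \<bar>\<psi> (\<Phi> (g x))\<bar>
                                       + \<bar>\<xi> (h (g y))\<bar> * \<bar>\<psi> (\<Phi> (g x)) - \<psi> (\<Phi> (g y))\<bar>"
      by (simp add: abs_mult[symmetric] abs_triangle_ineq)
    also have "\<dots> \<le> K * (c' * c) powr \<alpha> * \<bar>x - y\<bar> powr \<alpha> * A + Xi * (B * (1 + M * c) * \<bar>x - y\<bar> powr \<alpha>)"
      using \<xi>_branch_diff[OF g x y] \<psi>_branch_diff[OF g x y] \<psi>_le[OF gxy(1)] \<xi>h_le[OF gxy(2)] \<xi>(2) A0 Xi0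
      unfolding B_def by (intro add_mono mult_mono) auto
    finally show ?thesis by (simp add: algebra_simps)
  qed
  have "in_Cloc \<alpha> F P ?\<phi> \<and> norm_Cloc \<alpha> F P ?\<phi> \<le> Xi * A + (K * (c' * c) powr \<alpha> * A + Xi * (1 + M * c) * B)"
    using branches(1) sup holder by (rule in_Cloc_norm_Cloc_leI)
  moreover have "0 \<le> Xi * B + K * (c' * c) powr \<alpha> * B + Xi * (1 + M * c) * A"
    using Xi0 \<xi>(2) A0 B0 M0 c0 by simp
  ultimately show ?thesis
    unfolding norm_Cloc_hat_def A_def[symmetric] B_def[symmetric] by (simp add: algebra_simps)
qed

end

theorem lemma6p19:
  fixes P :: "real set set" and F :: "real \<Rightarrow> real" and \<alpha> \<rho> \<gamma> C0 :: real
    and \<xi> :: "real \<Rightarrow> real" and \<Omega> :: "(real ^ 'N) set"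
    and G :: "real \<times> (real ^ 'N) \<Rightarrow> real ^ 'N" and y0 :: "real ^ 'N"
  assumes alpha: "0 < \<alpha>" "\<alpha> \<le> 1"
    and rho: "0 < \<rho>" "\<rho> < 1"
    and gamma: "0 < \<gamma>" "\<gamma> < 1"
    and C0: "0 < C0"
    \<comment> \<open>countable Lebesgue-mod-0 partition of [0,1] into open intervals\<close>
    and P_countable: "countable P"
    and P_intervals: "\<forall>a\<in>P. \<exists>l u. 0 \<le> l \<and> l < u \<and> u \<le> 1 \<and> a = {l<..<u}"
    and P_disjoint: "pairwise disjnt P"
    and P_full: "{0..1} - \<Union>P \<in> null_sets lborel"
    \<comment> \<open>F is a full-branch map, C^{1+alpha} on each element\<close>
    and F_maps: "\<forall>x\<in>{0..1}. F x \<in> {0..1}"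
    and F_full_branch: "\<forall>a\<in>P. bij_betw F a {0<..<1}"
    and F_C1alpha: "\<forall>a\<in>P. (\<forall>x\<in>a. F differentiable (at x))
                      \<and> (\<exists>K. \<forall>x\<in>a. \<forall>y\<in>a. \<bar>deriv F x - deriv F y\<bar> \<le> K * \<bar>x - y\<bar> powr \<alpha>)"
    \<comment> \<open>uniform expansion and bounded distortion\<close>
    and H_n_contr: "\<forall>n\<ge>1. \<forall>h\<in>inv_branches_n F P n. \<forall>x\<in>{0<..<1}.
                      h differentiable (at x) \<and> \<bar>deriv h x\<bar> \<le> C0 * \<rho> ^ n"
    and H_distortion: "\<forall>h\<in>inv_branches F P. \<forall>x\<in>{0<..<1}. \<forall>y\<in>{0<..<1}.
                      \<bar>ln \<bar>deriv h x\<bar> - ln \<bar>deriv h y\<bar>\<bar> \<le> C0 * \<bar>x - y\<bar> powr \<alpha>"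
    \<comment> \<open>xi is an alpha-Hoelder density of the acip mu_F\<close>
    and xi_nonneg: "\<forall>x\<in>{0..1}. 0 \<le> \<xi> x"
    and xi_prob: "prob_space (density lborel (\<lambda>x. ennreal (indicator {0..1} x * \<xi> x)))"
    and xi_meas: "F \<in> measurable (density lborel (\<lambda>x. ennreal (indicator {0..1} x * \<xi> x)))
                                 (density lborel (\<lambda>x. ennreal (indicator {0..1} x * \<xi> x)))"
    and xi_inv: "distr (density lborel (\<lambda>x. ennreal (indicator {0..1} x * \<xi> x)))
                       (density lborel (\<lambda>x. ennreal (indicator {0..1} x * \<xi> x))) F
                 = density lborel (\<lambda>x. ennreal (indicator {0..1} x * \<xi> x))"
    and xi_holder: "\<exists>K. \<forall>x\<in>{0..1}. \<forall>y\<in>{0..1}. \<bar>\<xi> x - \<xi> y\<bar> \<le> K * \<bar>x - y\<bar> powr \<alpha>"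
    \<comment> \<open>the fibre Omega and the fibre map G\<close>
    and Omega_compact: "compact \<Omega>"
    and y0_in: "y0 \<in> \<Omega>"
    and G_maps: "\<forall>p\<in>{0..1} \<times> \<Omega>. G p \<in> \<Omega>"
    and G_C1alpha: "\<exists>G' K. (\<forall>p\<in>{0..1} \<times> \<Omega>.
                         (G has_derivative blinfun_apply (G' p)) (at p within {0..1} \<times> \<Omega>))
                      \<and> (\<forall>p\<in>{0..1} \<times> \<Omega>. \<forall>q\<in>{0..1} \<times> \<Omega>. norm (G' p - G' q) \<le> K * dhat p q powr \<alpha>)"
    and G_contr: "\<forall>n x y1 y2. x \<in> {0..1} \<and> y1 \<in> \<Omega> \<and> y2 \<in> \<Omega> \<longrightarrow>
                    dhat ((Fhat F G ^^ n) (x, y1)) ((Fhat F G ^^ n) (x, y2)) \<le> C0 * \<gamma> ^ n * norm (y1 - y2)"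
  shows "\<exists>C>0. \<forall>\<psi>. in_Cloc_hat \<alpha> F P \<Omega> \<psi> \<longrightarrow>
           (\<forall>n\<ge>1. \<forall>h\<in>inv_branches_n F P n.
              in_Cloc \<alpha> F P (\<lambda>x. \<xi> (h x) * psi_n F G y0 \<psi> n (h x))
              \<and> norm_Cloc \<alpha> F P (\<lambda>x. \<xi> (h x) * psi_n F G y0 \<psi> n (h x)) \<le> C * norm_Cloc_hat \<alpha> F P \<Omega> \<psi>)"
proof -
  have P_sub: "\<Union>P \<subseteq> {0<..<1}" using P_intervals by fastforce
  obtain K where K: "0 \<le> K" "\<And>x y. x \<in> {0..1} \<Longrightarrow> y \<in> {0..1} \<Longrightarrow> \<bar>\<xi> x - \<xi> y\<bar> \<le> K * \<bar>x - y\<bar> powr \<alpha>"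
    using xi_holder by (meson max.cobounded1 max.cobounded2 mult_right_mono order_trans powr_ge_zero)
  have "bounded (\<xi> ` {0..1})"
    using K alpha by (intro holder_bounded_gauge_imp_bounded[where \<alpha> = \<alpha> and K = K and d = dist and D = 1])
      (auto simp: dist_real_def)
  then obtain Xi where Xi: "0 < Xi" "\<And>x. x \<in> {0..1} \<Longrightarrow> \<bar>\<xi> x\<bar> \<le> Xi" by (auto simp: bounded_pos)
  obtain L where G_lip: "\<And>w. w \<in> \<Omega> \<Longrightarrow> L-lipschitz_on {0..1} (\<lambda>x. G (x, w))"
    using C1alpha_imp_lipschitz_on_base[OF G_C1alpha compact_imp_bounded[OF Omega_compact]] alpha by auto
  have branches_lip: "\<And>m t. 1 \<le> m \<Longrightarrow> t \<in> inv_branches_n F P m \<Longrightarrow> C0-lipschitz_on {0<..<1} t"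
    using inv_branches_n_lipschitz_on[OF H_n_contr] C0 rho by auto
  define M where "M = C0 * L * C0 / (1 - \<gamma>)"
  define C where "C = Xi + K * (C0 * C0) powr \<alpha> + Xi * (1 + M * C0)"
  have "0 \<le> M" using lipschitz_on_nonneg[OF G_lip[OF y0_in]] C0 gamma by (simp add: M_def)
  then have "0 < C" using Xi C0 K(1) by (simp add: C_def add_pos_nonneg)
  moreover have "in_Cloc \<alpha> F P (\<lambda>x. \<xi> (h x) * psi_n F G y0 \<psi> n (h x))
      \<and> norm_Cloc \<alpha> F P (\<lambda>x. \<xi> (h x) * psi_n F G y0 \<psi> n (h x)) \<le> C * norm_Cloc_hat \<alpha> F P \<Omega> \<psi>"
    if \<psi>: "in_Cloc_hat \<alpha> F P \<Omega> \<psi>" and n: "1 \<le> n" and h: "h \<in> inv_branches_n F P n" for \<psi> n h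
  proof -
    have nonempty: "inv_branches F P \<noteq> {}" using h n by (cases n) auto
    have h_maps: "h ` {0<..<1} \<subseteq> {0..1}" using inv_branches_n_image_subset[OF P_sub h] by fastforce
    have lift_lip: "M-lipschitz_on {0<..<1} (\<lambda>x. snd ((Fhat F G ^^ n) (h x, y0)))"
      unfolding M_def using C0 gamma
      by (intro snd_funpow_Fhat_branch_lipschitz_on[OF P_sub F_maps G_maps G_lip G_contr branches_lip _ _ _ h y0_in])
        auto
    show ?thesis
      unfolding psi_n_def C_def
      by (rule in_Cloc_branch_product[OF \<psi> alpha nonempty inv_branches_image_subset[OF P_sub]
            branches_lip[of 1, simplified] h_maps branches_lip[OF n h] Xi(2) K
            funpow_Fhat_inv_branch[OF P_sub F_maps G_maps h y0_in] lift_lip])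
  qed
  ultimately show ?thesis by blast
qed

end
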